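(* Suppose there is $x_0\in\mathbb{R}$ such that $k^2$ is continuous, nonincreasing on $(-\infty,x_0]$ and nondecreasing on $[x_0,\infty)$, with minimum value $k^2_{\min}=k^2(x_0)$ (which may be negative). Let $\Delta>0$ satisfy $k^2_{\min}\le\Delta^2\le\min\{k_{+\infty}^2,k_{-\infty}^2\}$. Then $$T\ \ge\ \mathrm{sech}^2\left\{\frac12\ln\frac{k_{+\infty}k_{-\infty}}{\Delta^2}+\frac{1}{2\Delta}\int_{\{x:\,k^2(x)<\Delta^2\}}\big(\Delta^2-k^2\big)\,\mathrm{d}x\right\}.$$
   Context: Standing setup: $k^2:\mathbb{R}\to\mathbb{R}$ is a piecewise continuous function (it may be negative somewhere) with $k^2(x)\to k_{\pm\infty}^2$ as $x\to\pm\infty$, where $k_{\pm\infty}>0$ and $k^2-k_{\pm\infty}^2$ is integrable near $\pm\infty$. For the equation $u''+k^2(x)u=0$ there is a solution with $u(x)=e^{ik_{-\infty}x}+r\,e^{-ik_{-\infty}x}+o(1)$ as $x\to-\infty$ and $u(x)=\tau\,e^{ik_{+\infty}x}+o(1)$ as $x\to+\infty$; the transmission probability is $T=(k_{+\infty}/k_{-\infty})|\tau|^2$. Here $\mathrm{sech}=1/\cosh$. *)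

theory Defs
  imports "HOL-Analysis.Analysis"
begin

definition sech :: "real \<Rightarrow> real" where
  "sech x = 1 / cosh x"

end

theory Submission
  imports Defs
begin

text \<open>
  For a solution \<open>u\<close> of \<open>u'' = - k2 u\<close> and a reference wave number \<open>c > 0\<close> consider the wave
  energy \<open>E_c = (|c u - i u'| + |c u + i u'|)\<^sup>2 / (4 c)\<close>; for a plane-wave superposition
  \<open>u = A e\<^sup>i\<^sup>c\<^sup>x + B e\<^sup>-\<^sup>i\<^sup>c\<^sup>x\<close> it equals \<open>c (|A| + |B|)\<^sup>2\<close>.  The proof rests on three estimates:
  (1) a Gronwall inequality: on an interval where \<open>|k2 - c\<^sup>2| \<le> c \<phi>\<close> the energy grows by at most
      the factor \<open>exp (\<integral> \<phi>)\<close>;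
  (2) changing the reference wave number from \<open>c\<close> to \<open>c'\<close> costs at most the factor \<open>max (c'/c) (c/c')\<close>;
  (3) the asymptotics of \<open>u\<close> identify the energy at \<open>-\<infinity>\<close> as \<open>km (1 + |r|)\<^sup>2\<close> and at \<open>+\<infinity>\<close> as
      \<open>kp |\<tau>|\<^sup>2\<close>, and conservation of the current gives \<open>kp |\<tau>|\<^sup>2 = km (1 - |r|\<^sup>2)\<close>.
  Measuring the energy with the local wave number \<open>sqrt (max \<Delta>\<^sup>2 k2)\<close>, which is monotone on both
  sides of the well, and chaining (1) and (2) along fine partitions yields
  \<open>km (1 + |r|)\<^sup>2 \<le> kp |\<tau>|\<^sup>2 e\<^sup>2\<^sup>\<Theta>\<close>, where \<open>\<Theta>\<close> is the argument of \<open>sech\<close> in the theorem.  Together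
  with the flux balance this says \<open>|r| \<le> tanh \<Theta>\<close>, i.e. \<open>T = 1 - |r|\<^sup>2 \<ge> sech\<^sup>2 \<Theta>\<close>.
\<close>

text \<open>Writing \<open>u = A e\<^sup>i\<^sup>c\<^sup>t + B e\<^sup>-\<^sup>i\<^sup>c\<^sup>t\<close> locally, \<open>c z - i w = 2 c A e\<^sup>i\<^sup>c\<^sup>t\<close> and
  \<open>c z + i w = 2 c B e\<^sup>-\<^sup>i\<^sup>c\<^sup>t\<close>, so the energy is \<open>c (|A| + |B|)\<^sup>2\<close>.\<close>
definition wave_energy :: "real \<Rightarrow> complex \<Rightarrow> complex \<Rightarrow> real" where
  "wave_energy c z w = (cmod (of_real c * z - \<i> * w) + cmod (of_real c * z + \<i> * w))\<^sup>2 / (4 * c)"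

lemma wave_energy_nonneg: "c > 0 \<Longrightarrow> wave_energy c z w \<ge> 0"
  unfolding wave_energy_def by simp

text \<open>Parallelogram law and \<open>(c z - i w) (c z + i w) = c\<^sup>2 z\<^sup>2 + w\<^sup>2\<close> give a closed form in which
  the dependence on \<open>c\<close> is explicit.\<close>
lemma wave_energy_product_form:
  assumes "c > 0"
  shows "wave_energy c z w = (c\<^sup>2 * (cmod z)\<^sup>2 + (cmod w)\<^sup>2 + cmod (of_real (c\<^sup>2) * z\<^sup>2 + w\<^sup>2)) / (2 * c)"
proof -
  define a where "a = cmod (of_real c * z - \<i> * w)"
  define b where "b = cmod (of_real c * z + \<i> * w)"
  have parallelogram: "a\<^sup>2 + b\<^sup>2 = 2 * (c\<^sup>2 * (cmod z)\<^sup>2 + (cmod w)\<^sup>2)"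
    unfolding a_def b_def cmod_power2 by (simp add: power2_eq_square algebra_simps)
  have "(of_real c * z - \<i> * w) * (of_real c * z + \<i> * w) = of_real (c\<^sup>2) * z\<^sup>2 + w\<^sup>2"
    by (simp add: power2_eq_square algebra_simps)
  hence product: "a * b = cmod (of_real (c\<^sup>2) * z\<^sup>2 + w\<^sup>2)"
    unfolding a_def b_def by (metis norm_mult)
  have "wave_energy c z w = (a\<^sup>2 + b\<^sup>2 + 2 * (a * b)) / (4 * c)"
    unfolding wave_energy_def a_def b_def by algebra
  thus ?thesis unfolding parallelogram product using assms by (simp add: field_simps)
qed

lemma wave_energy_scale:
  assumes c: "0 < c" and cc': "c \<le> c'"
  shows "wave_energy c z w \<le> (c' / c) * wave_energy c' z w"
    and "wave_energy c' z w \<le> (c' / c) * wave_energy c z w"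
proof -
  define N where "N = (\<lambda>s. s\<^sup>2 * (cmod z)\<^sup>2 + (cmod w)\<^sup>2 + cmod (of_real (s\<^sup>2) * z\<^sup>2 + w\<^sup>2))"
  have c': "0 < c'" using c cc' by simp
  have E: "wave_energy s z w = N s / (2 * s)" if "s > 0" for s
    unfolding N_def using wave_energy_product_form[OF that] .
  define t where "t = (c' / c)\<^sup>2"
  have t1: "1 \<le> t" unfolding t_def using c cc' by simp
  have ct: "c'\<^sup>2 = t * c\<^sup>2" unfolding t_def using c by (simp add: power_divide)
  have "N c \<le> N c'"
  proof -
    have eq: "of_real (c\<^sup>2) * z\<^sup>2 + w\<^sup>2 = (of_real (c'\<^sup>2) * z\<^sup>2 + w\<^sup>2) - of_real (c'\<^sup>2 - c\<^sup>2) * z\<^sup>2"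
      by (simp add: algebra_simps)
    have "cmod (of_real (c'\<^sup>2 - c\<^sup>2) * z\<^sup>2) = (c'\<^sup>2 - c\<^sup>2) * (cmod z)\<^sup>2"
      using cc' c by (subst norm_mult, subst norm_of_real) (simp add: norm_power power_mono)
    hence "cmod (of_real (c\<^sup>2) * z\<^sup>2 + w\<^sup>2) \<le> cmod (of_real (c'\<^sup>2) * z\<^sup>2 + w\<^sup>2) + (c'\<^sup>2 - c\<^sup>2) * (cmod z)\<^sup>2"
      by (metis eq norm_triangle_ineq4)
    thus ?thesis unfolding N_def by (simp add: algebra_simps)
  qed
  moreover have "N c' \<le> t * N c"
  proof -
    have eq: "of_real (c'\<^sup>2) * z\<^sup>2 + w\<^sup>2 = of_real t * (of_real (c\<^sup>2) * z\<^sup>2 + w\<^sup>2) - of_real (t - 1) * w\<^sup>2"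
      unfolding ct by (simp add: algebra_simps)
    have "cmod (of_real t * (of_real (c\<^sup>2) * z\<^sup>2 + w\<^sup>2)) = t * cmod (of_real (c\<^sup>2) * z\<^sup>2 + w\<^sup>2)"
      and "cmod (of_real (t - 1) * w\<^sup>2) = (t - 1) * (cmod w)\<^sup>2"
      using t1 by (simp_all only: norm_mult norm_of_real norm_power)
    hence "cmod (of_real (c'\<^sup>2) * z\<^sup>2 + w\<^sup>2) \<le> t * cmod (of_real (c\<^sup>2) * z\<^sup>2 + w\<^sup>2) + (t - 1) * (cmod w)\<^sup>2"
      by (metis eq norm_triangle_ineq4)
    thus ?thesis unfolding N_def ct by (simp add: algebra_simps)
  qed
  moreover have "N c \<ge> 0" unfolding N_def by simp
  ultimately show "wave_energy c z w \<le> (c' / c) * wave_energy c' z w"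
    and "wave_energy c' z w \<le> (c' / c) * wave_energy c z w"
    unfolding E[OF c] E[OF c'] t_def using c c' by (simp_all add: field_simps power2_eq_square)
qed

lemma wave_energy_rescale:
  assumes "c > 0" "c' > 0"
  shows "wave_energy c' z w \<le> exp \<bar>ln c' - ln c\<bar> * wave_energy c z w"
proof (cases "c \<le> c'")
  case True
  hence "exp \<bar>ln c' - ln c\<bar> = c' / c" using assms by (simp add: exp_diff)
  thus ?thesis using wave_energy_scale(2)[OF assms(1) True] by simp
next
  case False
  hence "exp \<bar>ln c' - ln c\<bar> = c / c'" using assms by (simp add: exp_diff)
  thus ?thesis using wave_energy_scale(1)[OF assms(2)] False by simp
qed

text \<open>The square roots are regularized by \<open>\<epsilon> > 0\<close> to make them differentiable.\<close>
lemma sqrt_sum_gronwall_regularized: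
  fixes f g f' g' \<phi> :: "real \<Rightarrow> real" and a b \<epsilon> :: real
  assumes df: "\<And>t. (f has_real_derivative f' t) (at t)"
    and dg: "\<And>t. (g has_real_derivative g' t) (at t)"
    and f0: "\<And>t. f t \<ge> 0" and g0: "\<And>t. g t \<ge> 0"
    and phi: "continuous_on UNIV \<phi>" and ab: "a \<le> b" and eps: "\<epsilon> > 0"
    and phi0: "\<And>t. t \<in> {a..b} \<Longrightarrow> \<phi> t \<ge> 0"
    and f'_bound: "\<And>t. t \<in> {a..b} \<Longrightarrow> \<bar>f' t\<bar> \<le> \<phi> t * sqrt (f t * g t)"
    and g'_bound: "\<And>t. t \<in> {a..b} \<Longrightarrow> \<bar>g' t\<bar> \<le> \<phi> t * sqrt (f t * g t)"
  shows "sqrt (f a + \<epsilon>) + sqrt (g a + \<epsilon>) \<le>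
         (sqrt (f b + \<epsilon>) + sqrt (g b + \<epsilon>)) * exp (integral {a..b} \<phi> / 2)"
proof -
  define s1 where "s1 = (\<lambda>t. sqrt (f t + \<epsilon>))"
  define s2 where "s2 = (\<lambda>t. sqrt (g t + \<epsilon>))"
  define I where "I = (\<lambda>x. integral {a-1..x} \<phi>)"
  define H where "H = (\<lambda>t. (s1 t + s2 t) * exp (I t / 2))"
  have s1_pos: "s1 t > 0" and s2_pos: "s2 t > 0" for t
    unfolding s1_def s2_def using f0[of t] g0[of t] eps by simp_all
  have ds1: "(s1 has_real_derivative f' t / (2 * s1 t)) (at t)" for t
    unfolding s1_def using df[of t] f0[of t] eps
    by (auto intro!: derivative_eq_intros simp: add_nonneg_pos) (simp add: field_simps)
  have ds2: "(s2 has_real_derivative g' t / (2 * s2 t)) (at t)" for t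
    unfolding s2_def using dg[of t] g0[of t] eps
    by (auto intro!: derivative_eq_intros simp: add_nonneg_pos) (simp add: field_simps)
  have dI: "(I has_real_derivative \<phi> t) (at t)" if "t \<in> {a..b}" for t
  proof -
    have "(I has_real_derivative \<phi> t) (at t within {a-1..b+1})"
      unfolding I_def using that by (intro integral_has_real_derivative continuous_on_subset[OF phi]) auto
    moreover have "at t within {a-1..b+1} = at t" using that by (intro at_within_interior) auto
    ultimately show ?thesis by simp
  qed
  text \<open>Since \<open>sqrt (f t * g t) \<le> s1 t * s2 t\<close>, each square root decreases at most at rate \<open>\<phi>/2\<close>
    times the other one, so \<open>(s1 + s2) * exp (I / 2)\<close> is nondecreasing.\<close>
  have H_mono: "H a \<le> H b"
  proof (rule DERIV_nonneg_imp_nondecreasing[OF ab])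
    fix t assume "a \<le> t" "t \<le> b"
    hence tab: "t \<in> {a..b}" by simp
    have fg: "sqrt (f t * g t) \<le> s1 t * s2 t"
      unfolding s1_def s2_def real_sqrt_mult[symmetric] using f0[of t] g0[of t] eps
      by (intro real_sqrt_le_mono mult_mono) auto
    have "- f' t \<le> \<phi> t * (s1 t * s2 t)"
      using f'_bound[OF tab] mult_left_mono[OF fg phi0[OF tab]] by linarith
    hence f'_low: "f' t / (2 * s1 t) \<ge> - (\<phi> t / 2 * s2 t)"
      using s1_pos[of t] by (simp add: field_simps)
    have "- g' t \<le> \<phi> t * (s1 t * s2 t)"
      using g'_bound[OF tab] mult_left_mono[OF fg phi0[OF tab]] by linarith
    hence g'_low: "g' t / (2 * s2 t) \<ge> - (\<phi> t / 2 * s1 t)"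
      using s2_pos[of t] by (simp add: field_simps)
    have dH: "(H has_real_derivative (f' t / (2 * s1 t) + g' t / (2 * s2 t)) * exp (I t / 2)
        + (s1 t + s2 t) * (exp (I t / 2) * (\<phi> t / 2))) (at t)"
      unfolding H_def by (auto intro!: derivative_eq_intros ds1 ds2 dI[OF tab] simp: algebra_simps)
    moreover have "0 \<le> (f' t / (2 * s1 t) + g' t / (2 * s2 t)) * exp (I t / 2)
        + (s1 t + s2 t) * (exp (I t / 2) * (\<phi> t / 2))"
    proof -
      have "(s1 t + s2 t) * (\<phi> t / 2) = \<phi> t / 2 * s1 t + \<phi> t / 2 * s2 t"
        by (simp add: algebra_simps)
      hence "0 \<le> f' t / (2 * s1 t) + g' t / (2 * s2 t) + (s1 t + s2 t) * (\<phi> t / 2)"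
        using f'_low g'_low by linarith
      hence "0 \<le> (f' t / (2 * s1 t) + g' t / (2 * s2 t) + (s1 t + s2 t) * (\<phi> t / 2)) * exp (I t / 2)"
        by simp
      thus ?thesis by (simp add: algebra_simps)
    qed
    ultimately show "\<exists>y. (H has_real_derivative y) (at t) \<and> 0 \<le> y" by blast
  qed
  have "I b = I a + integral {a..b} \<phi>"
    unfolding I_def using ab
    by (intro Henstock_Kurzweil_Integration.integral_combine[symmetric]
        integrable_continuous_real continuous_on_subset[OF phi]) auto
  hence "H b = (s1 b + s2 b) * exp (integral {a..b} \<phi> / 2) * exp (I a / 2)"
    unfolding H_def by (simp add: add_divide_distrib exp_add mult.commute mult.left_commute)
  with H_mono have "(s1 a + s2 a) * exp (I a / 2) \<le> (s1 b + s2 b) * exp (integral {a..b} \<phi> / 2) * exp (I a / 2)"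
    unfolding H_def by simp
  thus ?thesis unfolding s1_def s2_def by (simp only: mult_le_cancel_right_pos[OF exp_gt_zero])
qed

lemma sqrt_sum_gronwall:
  fixes f g f' g' \<phi> :: "real \<Rightarrow> real" and a b :: real
  assumes df: "\<And>t. (f has_real_derivative f' t) (at t)"
    and dg: "\<And>t. (g has_real_derivative g' t) (at t)"
    and f0: "\<And>t. f t \<ge> 0" and g0: "\<And>t. g t \<ge> 0"
    and phi: "continuous_on UNIV \<phi>" and ab: "a \<le> b"
    and phi0: "\<And>t. t \<in> {a..b} \<Longrightarrow> \<phi> t \<ge> 0"
    and f'_bound: "\<And>t. t \<in> {a..b} \<Longrightarrow> \<bar>f' t\<bar> \<le> \<phi> t * sqrt (f t * g t)"
    and g'_bound: "\<And>t. t \<in> {a..b} \<Longrightarrow> \<bar>g' t\<bar> \<le> \<phi> t * sqrt (f t * g t)"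
  shows "sqrt (f a) + sqrt (g a) \<le> (sqrt (f b) + sqrt (g b)) * exp (integral {a..b} \<phi> / 2)"
proof (rule tendsto_le[OF trivial_limit_at_right_real])
  let ?E = "exp (integral {a..b} \<phi> / 2)"
  have "((\<lambda>\<epsilon>. (sqrt (f b + \<epsilon>) + sqrt (g b + \<epsilon>)) * ?E) \<longlongrightarrow> (sqrt (f b + 0) + sqrt (g b + 0)) * ?E) (at_right 0)"
    by (intro tendsto_intros tendsto_ident_at)
  thus "((\<lambda>\<epsilon>. (sqrt (f b + \<epsilon>) + sqrt (g b + \<epsilon>)) * ?E) \<longlongrightarrow> (sqrt (f b) + sqrt (g b)) * ?E) (at_right 0)"
    by simp
  have "sqrt (f a) + sqrt (g a) \<le> (sqrt (f b + \<epsilon>) + sqrt (g b + \<epsilon>)) * ?E" if "\<epsilon> > 0" for \<epsilon>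
  proof -
    have "sqrt (f a) \<le> sqrt (f a + \<epsilon>)" "sqrt (g a) \<le> sqrt (g a + \<epsilon>)" using that by simp_all
    with sqrt_sum_gronwall_regularized[OF df dg f0 g0 phi ab that phi0 f'_bound g'_bound]
    show ?thesis by linarith
  qed
  thus "\<forall>\<^sub>F \<epsilon> in at_right 0. sqrt (f a) + sqrt (g a) \<le> (sqrt (f b + \<epsilon>) + sqrt (g b + \<epsilon>)) * ?E"
    by (rule eventually_mono[OF eventually_at_right_less[of 0]])
qed (rule tendsto_const)

lemma wave_energy_gronwall:
  fixes u u' :: "real \<Rightarrow> complex" and k2 \<phi> :: "real \<Rightarrow> real" and c a b :: real
  assumes u_deriv: "\<And>x. (u has_vector_derivative u' x) (at x)"
    and u'_deriv: "\<And>x. (u' has_vector_derivative (- complex_of_real (k2 x) * u x)) (at x)"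
    and phi: "continuous_on UNIV \<phi>" and c: "c > 0" and ab: "a \<le> b"
    and bound: "\<And>t. t \<in> {a..b} \<Longrightarrow> \<bar>k2 t - c\<^sup>2\<bar> \<le> c * \<phi> t"
  shows "wave_energy c (u a) (u' a) \<le> wave_energy c (u b) (u' b) * exp (integral {a..b} \<phi>)"
proof -
  define X1 Y1 X2 Y2 where "X1 = (\<lambda>t. Re (u t))" and "Y1 = (\<lambda>t. Im (u t))"
    and "X2 = (\<lambda>t. Re (u' t))" and "Y2 = (\<lambda>t. Im (u' t))"
  have dX1: "(X1 has_real_derivative X2 t) (at t)" and dY1: "(Y1 has_real_derivative Y2 t) (at t)" for t
    unfolding X1_def X2_def Y1_def Y2_def
    by (rule has_field_derivative_Re[OF u_deriv] has_field_derivative_Im[OF u_deriv])+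
  have dX2: "(X2 has_real_derivative (- k2 t * X1 t)) (at t)"
    and dY2: "(Y2 has_real_derivative (- k2 t * Y1 t)) (at t)" for t
    using has_field_derivative_Re[OF u'_deriv[of t]] has_field_derivative_Im[OF u'_deriv[of t]]
    unfolding X1_def X2_def Y1_def Y2_def by simp_all
  text \<open>\<open>f = |c u - i u'|\<^sup>2\<close> and \<open>g = |c u + i u'|\<^sup>2\<close> in real coordinates; both have
    derivative \<open>D = 2 (c\<^sup>2 - k2) R\<close> with \<open>R = Re (cnj u * u')\<close>.\<close>
  define f g where "f = (\<lambda>t. (c * X1 t + Y2 t)\<^sup>2 + (c * Y1 t - X2 t)\<^sup>2)"
    and "g = (\<lambda>t. (c * X1 t - Y2 t)\<^sup>2 + (c * Y1 t + X2 t)\<^sup>2)"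
  define R where "R = (\<lambda>t. X1 t * X2 t + Y1 t * Y2 t)"
  define D where "D = (\<lambda>t. 2 * (c\<^sup>2 - k2 t) * R t)"
  have df: "(f has_real_derivative D t) (at t)" and dg: "(g has_real_derivative D t) (at t)" for t
    unfolding f_def g_def D_def R_def
    by (auto intro!: derivative_eq_intros dX1 dY1 dX2 dY2 simp: algebra_simps power2_eq_square)
  have f0: "f t \<ge> 0" and g0: "g t \<ge> 0" for t unfolding f_def g_def by simp_all
  have R_bound: "2 * c * \<bar>R t\<bar> \<le> sqrt (f t * g t)" for t
  proof -
    have "f t * g t = (c\<^sup>2 * ((X1 t)\<^sup>2 + (Y1 t)\<^sup>2) - ((X2 t)\<^sup>2 + (Y2 t)\<^sup>2))\<^sup>2 + 4 * (c * R t)\<^sup>2"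
      unfolding f_def g_def R_def by (simp add: power2_eq_square algebra_simps)
    hence "(2 * c * \<bar>R t\<bar>)\<^sup>2 \<le> f t * g t" by (simp add: power_mult_distrib)
    thus ?thesis using real_le_rsqrt by blast
  qed
  have phi0: "\<phi> t \<ge> 0" if "t \<in> {a..b}" for t
    using bound[OF that] c by (smt (verit) zero_le_mult_iff)
  have D_bound: "\<bar>D t\<bar> \<le> \<phi> t * sqrt (f t * g t)" if t: "t \<in> {a..b}" for t
  proof -
    have "\<bar>D t\<bar> = \<bar>k2 t - c\<^sup>2\<bar> * (2 * \<bar>R t\<bar>)" unfolding D_def abs_mult by (simp add: abs_minus_commute)
    also have "\<dots> \<le> c * \<phi> t * (2 * \<bar>R t\<bar>)" using bound[OF t] by (intro mult_right_mono) auto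
    also have "\<dots> = \<phi> t * (2 * c * \<bar>R t\<bar>)" by simp
    also have "\<dots> \<le> \<phi> t * sqrt (f t * g t)" using R_bound phi0[OF t] by (intro mult_left_mono)
    finally show ?thesis .
  qed
  have "sqrt (f a) + sqrt (g a) \<le> (sqrt (f b) + sqrt (g b)) * exp (integral {a..b} \<phi> / 2)"
    by (rule sqrt_sum_gronwall[OF df dg f0 g0 phi ab phi0 D_bound D_bound])
  hence "(sqrt (f a) + sqrt (g a))\<^sup>2 \<le> ((sqrt (f b) + sqrt (g b)) * exp (integral {a..b} \<phi> / 2))\<^sup>2"
    using f0[of a] g0[of a] by (intro power_mono) simp_all
  also have "\<dots> = (sqrt (f b) + sqrt (g b))\<^sup>2 * exp (integral {a..b} \<phi>)"
    by (simp add: power_mult_distrib power2_eq_square flip: exp_add)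
  finally have "(sqrt (f a) + sqrt (g a))\<^sup>2 \<le> (sqrt (f b) + sqrt (g b))\<^sup>2 * exp (integral {a..b} \<phi>)" .
  moreover have "cmod (of_real c * u t - \<i> * u' t) = sqrt (f t)"
    and "cmod (of_real c * u t + \<i> * u' t) = sqrt (g t)" for t
    unfolding f_def g_def X1_def Y1_def X2_def Y2_def cmod_def by simp_all
  ultimately show ?thesis unfolding wave_energy_def using c by (simp add: divide_right_mono)
qed

lemma telescoping_exp_bound:
  fixes F \<Phi> :: "nat \<Rightarrow> real"
  assumes step: "\<And>m. m < n \<Longrightarrow> F m \<le> F (Suc m) * exp (\<Phi> (Suc m) - \<Phi> m)"
  shows "F 0 \<le> F n * exp (\<Phi> n - \<Phi> 0)"
  using step
proof (induction n)
  case (Suc n)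
  have "F 0 \<le> F n * exp (\<Phi> n - \<Phi> 0)" using Suc by simp
  also have "\<dots> \<le> F (Suc n) * exp (\<Phi> (Suc n) - \<Phi> n) * exp (\<Phi> n - \<Phi> 0)"
    using Suc.prems[of n] by (intro mult_right_mono) auto
  also have "\<dots> = F (Suc n) * exp (\<Phi> (Suc n) - \<Phi> 0)"
    by (simp add: mult.assoc flip: exp_add)
  finally show ?case .
qed simp

definition local_energy :: "(real \<Rightarrow> real) \<Rightarrow> (real \<Rightarrow> complex) \<Rightarrow> (real \<Rightarrow> complex) \<Rightarrow> real \<Rightarrow> real"
  where "local_energy C u u' t = wave_energy (sqrt (C t)) (u t) (u' t)"

context
  fixes u u' :: "real \<Rightarrow> complex" and k2 g C :: "real \<Rightarrow> real" and \<Delta> :: real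
  assumes u_deriv: "\<And>x. (u has_vector_derivative u' x) (at x)"
    and u'_deriv: "\<And>x. (u' has_vector_derivative (- complex_of_real (k2 x) * u x)) (at x)"
    and g_cont: "continuous_on UNIV g" and \<Delta>_pos: "\<Delta> > 0"
    and C_ge: "\<And>t. \<Delta>\<^sup>2 \<le> C t" and k2_close: "\<And>t. \<bar>k2 t - C t\<bar> \<le> \<Delta> * g t"
begin

lemma C_pos: "C t > 0"
  using C_ge[of t] \<Delta>_pos by (smt (verit) zero_less_power)

lemma g_nonneg: "g t \<ge> 0"
  using k2_close[of t] \<Delta>_pos by (smt (verit) zero_le_mult_iff)

lemma local_energy_nonneg: "local_energy C u u' t \<ge> 0"
  unfolding local_energy_def using C_pos[of t] by (simp add: wave_energy_nonneg)

text \<open>One step: on \<open>[y, z]\<close> compare with the fixed wave number \<open>sqrt (C y)\<close> by Gronwall (the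
  variation of \<open>C\<close> on the interval enters as an extra error), then switch to \<open>sqrt (C z)\<close>.\<close>
lemma local_energy_step:
  assumes yz: "y \<le> z" and C_between: "\<And>t. t \<in> {y..z} \<Longrightarrow> \<bar>C t - C y\<bar> \<le> \<bar>C z - C y\<bar>"
  shows "local_energy C u u' y \<le> local_energy C u u' z *
     exp (\<bar>ln (C z) / 2 - ln (C y) / 2\<bar> + integral {y..z} g + (z - y) * \<bar>C z - C y\<bar> / \<Delta>)"
proof -
  define c where "c = sqrt (C y)"
  define K where "K = \<bar>C z - C y\<bar> / \<Delta>"
  have c: "c > 0" "\<Delta> \<le> c" unfolding c_def using C_pos[of y] C_ge[of y] \<Delta>_pos
    by (auto intro: real_le_rsqrt)
  have c2: "c\<^sup>2 = C y" unfolding c_def using C_pos[of y] by simp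
  have K0: "K \<ge> 0" unfolding K_def using \<Delta>_pos by simp
  have bound: "\<bar>k2 t - c\<^sup>2\<bar> \<le> c * (g t + K)" if t: "t \<in> {y..z}" for t
  proof -
    have "\<bar>k2 t - c\<^sup>2\<bar> \<le> \<bar>k2 t - C t\<bar> + \<bar>C t - C y\<bar>" unfolding c2 by linarith
    also have "\<dots> \<le> \<Delta> * g t + \<Delta> * K"
      using k2_close[of t] C_between[OF t] \<Delta>_pos unfolding K_def by simp
    also have "\<dots> \<le> c * g t + c * K"
      using c g_nonneg[of t] K0 by (intro add_mono mult_right_mono) auto
    finally show ?thesis by (simp add: algebra_simps)
  qed
  have gronwall: "wave_energy c (u y) (u' y) \<le> wave_energy c (u z) (u' z) * exp (integral {y..z} (\<lambda>t. g t + K))"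
    by (rule wave_energy_gronwall[OF u_deriv u'_deriv _ c(1) yz bound]) (intro continuous_intros g_cont)
  have "integral {y..z} (\<lambda>t. g t + K) = integral {y..z} g + integral {y..z} (\<lambda>t. K)"
    by (intro Henstock_Kurzweil_Integration.integral_add integrable_continuous_real
        continuous_on_subset[OF g_cont]) auto
  hence integral_eq: "integral {y..z} (\<lambda>t. g t + K) = integral {y..z} g + (z - y) * K"
    using yz by simp
  have rescale: "wave_energy c (u z) (u' z) \<le> exp \<bar>ln (C z) / 2 - ln (C y) / 2\<bar> * local_energy C u u' z"
    using wave_energy_rescale[OF _ c(1), of "sqrt (C z)"] C_pos[of y] C_pos[of z]
    unfolding local_energy_def c_def by (simp add: ln_sqrt abs_minus_commute)
  have "local_energy C u u' y \<le> exp \<bar>ln (C z) / 2 - ln (C y) / 2\<bar> * local_energy C u u' z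
      * exp (integral {y..z} g + (z - y) * K)"
    using order_trans[OF gronwall mult_right_mono[OF rescale exp_ge_zero]]
    unfolding local_energy_def c_def[symmetric] integral_eq .
  also have "\<dots> = local_energy C u u' z *
      exp (\<bar>ln (C z) / 2 - ln (C y) / 2\<bar> + (integral {y..z} g + (z - y) * K))"
    by (simp only: exp_add mult_ac)
  finally show ?thesis unfolding K_def by (simp add: add.assoc)
qed

text \<open>On an interval where \<open>C\<close> is monotone, chain \<open>n\<close> one-step estimates along a uniform
  partition; monotonicity makes all exponents telescope, leaving an error of order \<open>1/n\<close>.\<close>
lemma local_energy_partition:
  assumes ab: "a \<le> b" and C_mono: "mono_on {a..b} C \<or> antimono_on {a..b} C" and n: "n > 0"
  shows "local_energy C u u' a \<le> local_energy C u u' b *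
     exp (\<bar>ln (C b) / 2 - ln (C a) / 2\<bar> + integral {a..b} g + (b - a) / real n * \<bar>C b - C a\<bar> / \<Delta>)"
proof -
  have "\<exists>\<sigma>::real. (\<sigma> = 1 \<or> \<sigma> = -1) \<and> (\<forall>y z. a \<le> y \<longrightarrow> y \<le> z \<longrightarrow> z \<le> b \<longrightarrow> \<sigma> * C y \<le> \<sigma> * C z)"
  proof (cases "mono_on {a..b} C")
    case True
    thus ?thesis by (intro exI[of _ 1]) (auto simp: monotone_on_def)
  next
    case False
    hence "antimono_on {a..b} C" using C_mono by blast
    thus ?thesis by (intro exI[of _ "-1"]) (auto simp: monotone_on_def)
  qed
  then obtain \<sigma> :: real where \<sigma>: "\<sigma> = 1 \<or> \<sigma> = -1"
    and \<sigma>_mono: "\<And>y z. a \<le> y \<Longrightarrow> y \<le> z \<Longrightarrow> z \<le> b \<Longrightarrow> \<sigma> * C y \<le> \<sigma> * C z"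
    by blast
  have abs_C: "\<bar>C z - C y\<bar> = \<sigma> * (C z - C y)"
    and abs_L: "\<bar>ln (C z) / 2 - ln (C y) / 2\<bar> = \<sigma> * (ln (C z) / 2 - ln (C y) / 2)"
    if "a \<le> y" "y \<le> z" "z \<le> b" for y z
    using \<sigma> \<sigma>_mono[OF that] C_pos[of y] C_pos[of z] by (elim disjE; simp)+
  define h where "h = (b - a) / real n"
  define x where "x = (\<lambda>m::nat. a + real m * h)"
  define \<Phi> where "\<Phi> = (\<lambda>t. \<sigma> * (ln (C t) / 2) + integral {a..t} g + h * (\<sigma> * C t) / \<Delta>)"
  have h0: "h \<ge> 0" unfolding h_def using ab by simp
  have x_in: "a \<le> x m \<and> x m \<le> b" if "m \<le> n" for m
  proof -
    have "real m * h \<le> real n * h" using that h0 by (intro mult_right_mono) auto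
    also have "real n * h = b - a" unfolding h_def using n by simp
    finally show ?thesis unfolding x_def using h0 by simp
  qed
  have x_step: "x (Suc m) = x m + h" for m unfolding x_def by (simp add: algebra_simps)
  have "local_energy C u u' (x m) \<le> local_energy C u u' (x (Suc m)) * exp (\<Phi> (x (Suc m)) - \<Phi> (x m))"
    if m: "m < n" for m
  proof -
    let ?y = "x m" and ?z = "x (Suc m)"
    have yz: "a \<le> ?y" "?y \<le> ?z" "?z \<le> b" using x_in[of m] x_in[of "Suc m"] m h0 x_step[of m] by auto
    have "\<bar>C t - C ?y\<bar> \<le> \<bar>C ?z - C ?y\<bar>" if "t \<in> {?y..?z}" for t
      using that yz abs_C[of ?y t] abs_C[of ?y ?z] \<sigma>_mono[of t ?z] by (auto simp: right_diff_distrib)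
    note step = local_energy_step[OF yz(2) this]
    have "integral {a..?z} g = integral {a..?y} g + integral {?y..?z} g"
      by (intro Henstock_Kurzweil_Integration.integral_combine[symmetric] integrable_continuous_real
          continuous_on_subset[OF g_cont]) (use yz in auto)
    hence "\<Phi> ?z - \<Phi> ?y = \<bar>ln (C ?z) / 2 - ln (C ?y) / 2\<bar> + integral {?y..?z} g + (?z - ?y) * \<bar>C ?z - C ?y\<bar> / \<Delta>"
      unfolding \<Phi>_def abs_L[OF yz] abs_C[OF yz] by (simp add: x_step algebra_simps diff_divide_distrib)
    thus ?thesis using step by simp
  qed
  from telescoping_exp_bound[of n "\<lambda>m. local_energy C u u' (x m)" "\<lambda>m. \<Phi> (x m)", OF this]
  have "local_energy C u u' a \<le> local_energy C u u' b * exp (\<Phi> b - \<Phi> a)"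
    unfolding x_def h_def using n by simp
  moreover have "\<Phi> b - \<Phi> a = \<bar>ln (C b) / 2 - ln (C a) / 2\<bar> + integral {a..b} g + h * \<bar>C b - C a\<bar> / \<Delta>"
    unfolding \<Phi>_def abs_L[OF order_refl ab order_refl] abs_C[OF order_refl ab order_refl]
    by (simp add: algebra_simps diff_divide_distrib)
  ultimately show ?thesis unfolding h_def by simp
qed

text \<open>Letting the mesh tend to zero removes the discretization error.\<close>
lemma local_energy_monotone_interval:
  assumes ab: "a \<le> b" and C_mono: "mono_on {a..b} C \<or> antimono_on {a..b} C"
  shows "local_energy C u u' a \<le> local_energy C u u' b *
     exp (\<bar>ln (C b) / 2 - ln (C a) / 2\<bar> + integral {a..b} g)"
proof (rule LIMSEQ_le_const)
  let ?P = "local_energy C u u' b" and ?Y = "\<bar>ln (C b) / 2 - ln (C a) / 2\<bar> + integral {a..b} g"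
  have "(\<lambda>n. ?P * exp (?Y + (b - a) / real n * (\<bar>C b - C a\<bar> / \<Delta>))) \<longlonglongrightarrow> ?P * exp (?Y + 0 * (\<bar>C b - C a\<bar> / \<Delta>))"
    by (intro tendsto_intros)
  thus "(\<lambda>n. ?P * exp (?Y + (b - a) / real n * \<bar>C b - C a\<bar> / \<Delta>)) \<longlonglongrightarrow> ?P * exp ?Y"
    by simp
  show "\<exists>N. \<forall>n\<ge>N. local_energy C u u' a \<le> ?P * exp (?Y + (b - a) / real n * \<bar>C b - C a\<bar> / \<Delta>)"
    using local_energy_partition[OF ab C_mono] by (intro exI[of _ 1]) auto
qed

lemma local_energy_across_well:
  assumes C_left: "\<And>x y. x \<le> y \<Longrightarrow> y \<le> x_min \<Longrightarrow> C y \<le> C x"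
    and C_right: "\<And>x y. x_min \<le> x \<Longrightarrow> x \<le> y \<Longrightarrow> C x \<le> C y"
    and C_x_min: "C x_min = \<Delta>\<^sup>2" and g_int: "g integrable_on UNIV"
    and a: "a \<le> x_min" and b: "x_min \<le> b"
  shows "local_energy C u u' a \<le> local_energy C u u' b *
     exp (ln (C a) / 2 + ln (C b) / 2 - ln (\<Delta>\<^sup>2) + integral UNIV g)"
proof -
  have "antimono_on {a..x_min} C" and "mono_on {x_min..b} C"
    by (auto simp: monotone_on_def intro: C_left C_right)
  hence left: "local_energy C u u' a \<le> local_energy C u u' x_min * exp (\<bar>ln (C x_min) / 2 - ln (C a) / 2\<bar> + integral {a..x_min} g)"
    and right: "local_energy C u u' x_min \<le> local_energy C u u' b * exp (\<bar>ln (C b) / 2 - ln (C x_min) / 2\<bar> + integral {x_min..b} g)"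
    using local_energy_monotone_interval a b by blast+
  have ln_C_ge: "ln (\<Delta>\<^sup>2) \<le> ln (C t)" for t using C_ge[of t] C_pos[of t] \<Delta>_pos by simp
  have abs_left: "\<bar>ln (C x_min) / 2 - ln (C a) / 2\<bar> = ln (C a) / 2 - ln (\<Delta>\<^sup>2) / 2"
    and abs_right: "\<bar>ln (C b) / 2 - ln (C x_min) / 2\<bar> = ln (C b) / 2 - ln (\<Delta>\<^sup>2) / 2"
    using ln_C_ge[of a] ln_C_ge[of b] unfolding C_x_min by auto
  have g_int_ab: "g integrable_on {a..b}"
    by (intro integrable_continuous_real continuous_on_subset[OF g_cont]) auto
  have "integral {a..x_min} g + integral {x_min..b} g = integral {a..b} g"
    by (rule Henstock_Kurzweil_Integration.integral_combine[OF a b g_int_ab])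
  also have "\<dots> \<le> integral UNIV g"
    by (rule integral_subset_le[OF _ g_int_ab g_int]) (use g_nonneg in auto)
  finally have integral_le: "integral {a..x_min} g + integral {x_min..b} g \<le> integral UNIV g" .
  have "local_energy C u u' a \<le> local_energy C u u' b *
      (exp (\<bar>ln (C b) / 2 - ln (C x_min) / 2\<bar> + integral {x_min..b} g) * exp (\<bar>ln (C x_min) / 2 - ln (C a) / 2\<bar> + integral {a..x_min} g))"
    using order_trans[OF left mult_right_mono[OF right exp_ge_zero]] by (simp only: mult.assoc)
  also have "\<dots> = local_energy C u u' b *
      exp (ln (C a) / 2 + ln (C b) / 2 - ln (\<Delta>\<^sup>2) + (integral {a..x_min} g + integral {x_min..b} g))"
    unfolding abs_left abs_right by (simp add: algebra_simps flip: exp_add)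
  also have "\<dots> \<le> local_energy C u u' b * exp (ln (C a) / 2 + ln (C b) / 2 - ln (\<Delta>\<^sup>2) + integral UNIV g)"
    using integral_le local_energy_nonneg by (intro mult_left_mono) auto
  finally show ?thesis .
qed

end

lemma tendsto_zero_mult_bounded:
  fixes f g :: "'b \<Rightarrow> 'a::real_normed_algebra"
  assumes f: "(f \<longlongrightarrow> 0) F" and g: "\<And>x. norm (g x) \<le> B"
  shows "((\<lambda>x. f x * g x) \<longlongrightarrow> 0) F"
proof -
  have "Bfun g F" by (intro BfunI[where K = B] always_eventually allI g)
  with f show ?thesis
    using bounded_bilinear.Zfun_prod_Bfun[OF bounded_bilinear_mult, of f F g]
    by (simp add: tendsto_Zfun_iff)
qed

lemma asymptotic_mult:
  fixes f g A B :: "'b \<Rightarrow> 'a::real_normed_field"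
  assumes f: "((\<lambda>x. f x - A x) \<longlongrightarrow> 0) F" and g: "((\<lambda>x. g x - B x) \<longlongrightarrow> 0) F"
    and A: "\<And>x. norm (A x) \<le> MA" and B: "\<And>x. norm (B x) \<le> MB"
  shows "((\<lambda>x. f x * g x - A x * B x) \<longlongrightarrow> 0) F"
proof -
  have "((\<lambda>x. (f x - A x) * (g x - B x) + (f x - A x) * B x + (g x - B x) * A x) \<longlongrightarrow> 0 * 0 + 0 + 0) F"
    by (intro tendsto_intros f g tendsto_zero_mult_bounded[OF f B] tendsto_zero_mult_bounded[OF g A])
  moreover have "(f x - A x) * (g x - B x) + (f x - A x) * B x + (g x - B x) * A x = f x * g x - A x * B x" for x
    by (simp add: algebra_simps)
  ultimately show ?thesis by simp
qed

lemma asymptotic_norm: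
  fixes f A :: "'b \<Rightarrow> 'a::real_normed_vector"
  assumes "((\<lambda>x. f x - A x) \<longlongrightarrow> 0) F" and "\<And>x. norm (A x) = L"
  shows "((\<lambda>x. norm (f x)) \<longlongrightarrow> L) F"
proof -
  have "((\<lambda>x. norm (f x) - L) \<longlongrightarrow> 0) F"
  proof (rule tendsto_0_le[OF assms(1), of _ 1])
    show "\<forall>\<^sub>F x in F. norm (norm (f x) - L) \<le> norm (f x - A x) * 1"
      using norm_triangle_ineq3[of "f _" "A _"] assms(2) by (intro always_eventually allI) simp
  qed
  thus ?thesis by (simp add: LIM_zero_iff)
qed

lemma wave_energy_asymptotic:
  fixes c :: "'b \<Rightarrow> real" and z w A B :: "'b \<Rightarrow> complex"
  assumes c: "(c \<longlongrightarrow> c_lim) F" and c_pos: "c_lim > 0"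
    and z: "((\<lambda>t. z t - A t) \<longlongrightarrow> 0) F" and w: "((\<lambda>t. w t - B t) \<longlongrightarrow> 0) F"
    and A_bound: "\<And>t. norm (A t) \<le> M"
    and L1: "\<And>t. norm (of_real c_lim * A t - \<i> * B t) = L1"
    and L2: "\<And>t. norm (of_real c_lim * A t + \<i> * B t) = L2"
  shows "((\<lambda>t. wave_energy (c t) (z t) (w t)) \<longlongrightarrow> (L1 + L2)\<^sup>2 / (4 * c_lim)) F"
proof -
  have "((\<lambda>t. of_real (c t) - of_real c_lim) \<longlongrightarrow> (0::complex)) F"
    using tendsto_of_real[OF c, where 'a = complex] by (simp add: LIM_zero)
  hence cz: "((\<lambda>t. of_real (c t) * z t - of_real c_lim * A t) \<longlongrightarrow> 0) F"
    by (rule asymptotic_mult[OF _ z _ A_bound, where MA = "\<bar>c_lim\<bar>"]) simp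
  have iw: "((\<lambda>t. \<i> * w t - \<i> * B t) \<longlongrightarrow> 0) F"
    using tendsto_mult_right_zero[OF w, of \<i>] by (simp add: algebra_simps)
  have "((\<lambda>t. (of_real (c t) * z t - \<i> * w t) - (of_real c_lim * A t - \<i> * B t)) \<longlongrightarrow> 0) F"
    using tendsto_diff[OF cz iw] by (simp add: algebra_simps)
  from asymptotic_norm[OF this L1]
  have "((\<lambda>t. cmod (of_real (c t) * z t - \<i> * w t)) \<longlongrightarrow> L1) F" .
  moreover have "((\<lambda>t. (of_real (c t) * z t + \<i> * w t) - (of_real c_lim * A t + \<i> * B t)) \<longlongrightarrow> 0) F"
    using tendsto_add[OF cz iw] by (simp add: algebra_simps)
  from asymptotic_norm[OF this L2]
  have "((\<lambda>t. cmod (of_real (c t) * z t + \<i> * w t)) \<longlongrightarrow> L2) F" .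
  ultimately show ?thesis unfolding wave_energy_def using c_pos by (intro tendsto_intros c) auto
qed

lemma derivative_bound_unit_interval:
  fixes v v1 v2 :: "real \<Rightarrow> 'a::real_normed_vector"
  assumes d1: "\<And>t. (v has_vector_derivative v1 t) (at t)"
    and d2: "\<And>t. (v1 has_vector_derivative v2 t) (at t)"
    and B: "\<And>t. t \<in> {x..x+1} \<Longrightarrow> norm (v2 t) \<le> B"
  shows "norm (v1 x) \<le> norm (v (x+1)) + norm (v x) + 3 * B"
proof -
  let ?S = "{x..x+1}"
  have x_in: "x \<in> ?S" by simp
  have v1_bound: "norm (v1 t - v1 x) \<le> 3 * B" if t: "t \<in> ?S" for t
  proof -
    have "norm (v1 t - v1 x - (t - x) *\<^sub>R v2 x) \<le> norm (t - x) * (2 * B)"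
    proof (rule vector_differentiable_bound_linearization[of ?S v1 v2])
      show "(v1 has_vector_derivative v2 s) (at s within ?S)" for s
        using d2 has_vector_derivative_at_within by blast
      show "norm (v2 s - v2 x) \<le> 2 * B" if "s \<in> ?S" for s
        using B[OF that] B[OF x_in] norm_triangle_ineq4[of "v2 s" "v2 x"] by linarith
    qed (use t in \<open>auto simp: closed_segment_eq_real_ivl\<close>)
    moreover have "norm (t - x) * (2 * B) \<le> 2 * B" and "norm ((t - x) *\<^sub>R v2 x) \<le> B"
    proof -
      have tx: "0 \<le> t - x" "t - x \<le> 1" and B0: "0 \<le> B"
        using t order_trans[OF norm_ge_zero B[OF x_in]] by auto
      show "norm (t - x) * (2 * B) \<le> 2 * B" using mult_left_le_one_le[of "2 * B" "t - x"] tx B0 by simp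
      have "(t - x) * norm (v2 x) \<le> 1 * B" using tx B[OF x_in] by (intro mult_mono) auto
      thus "norm ((t - x) *\<^sub>R v2 x) \<le> B" using tx by simp
    qed
    ultimately show ?thesis using norm_triangle_sub[of "v1 t - v1 x" "(t - x) *\<^sub>R v2 x"] by linarith
  qed
  have "norm (v (x+1) - v x - ((x+1) - x) *\<^sub>R v1 x) \<le> norm ((x+1) - x) * (3 * B)"
  proof (rule vector_differentiable_bound_linearization[of ?S v v1])
    show "(v has_vector_derivative v1 s) (at s within ?S)" for s
      using d1 has_vector_derivative_at_within by blast
  qed (use v1_bound in \<open>auto simp: closed_segment_eq_real_ivl\<close>)
  hence "norm (v (x+1) - v x - v1 x) \<le> 3 * B" by simp
  moreover have "norm (v1 x) \<le> norm (v (x+1) - v x - v1 x) + norm (v (x+1) - v x)"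
    using norm_triangle_ineq4[of "v (x+1) - v x - v1 x" "v (x+1) - v x"] by (simp add: norm_minus_commute)
  moreover have "norm (v (x+1) - v x) \<le> norm (v (x+1)) + norm (v x)" by (rule norm_triangle_ineq4)
  ultimately show ?thesis by linarith
qed

lemma eventually_unit_interval_at_top:
  "eventually P at_top \<Longrightarrow> eventually (\<lambda>x::real. \<forall>s\<in>{x..x+1}. P s) at_top"
  unfolding eventually_at_top_linorder by (metis atLeastAtMost_iff order_trans)

lemma eventually_unit_interval_at_bot:
  "eventually P at_bot \<Longrightarrow> eventually (\<lambda>x::real. \<forall>s\<in>{x..x+1}. P s) at_bot"
  unfolding eventually_at_bot_linorder by (metis atLeastAtMost_iff add_le_cancel_right diff_add_cancel order_trans)

lemma derivative_tendsto_zero: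
  fixes v v1 v2 :: "real \<Rightarrow> 'a::real_normed_vector"
  assumes d1: "\<And>t. (v has_vector_derivative v1 t) (at t)"
    and d2: "\<And>t. (v1 has_vector_derivative v2 t) (at t)"
    and v: "(v \<longlongrightarrow> 0) F" and v2: "(v2 \<longlongrightarrow> 0) F"
    and unit_interval: "\<And>P. eventually P F \<Longrightarrow> eventually (\<lambda>x. \<forall>s\<in>{x..x+1}. P s) F"
  shows "(v1 \<longlongrightarrow> 0) F"
proof (rule tendsto_iff[THEN iffD2], intro allI impI)
  fix e :: real assume e: "e > 0"
  have "eventually (\<lambda>s. norm (v s) < e/6 \<and> norm (v2 s) < e/6) F"
    using tendsto_iff[THEN iffD1, OF v, rule_format, of "e/6"]
      tendsto_iff[THEN iffD1, OF v2, rule_format, of "e/6"] e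
    by (auto intro: eventually_conj)
  hence "eventually (\<lambda>x. \<forall>s\<in>{x..x+1}. norm (v s) < e/6 \<and> norm (v2 s) < e/6) F"
    by (rule unit_interval)
  thus "eventually (\<lambda>x. dist (v1 x) 0 < e) F"
  proof (rule eventually_mono)
    fix x assume small: "\<forall>s\<in>{x..x+1}. norm (v s) < e/6 \<and> norm (v2 s) < e/6"
    have "norm (v1 x) \<le> norm (v (x+1)) + norm (v x) + 3 * (e/6)"
      using small by (intro derivative_bound_unit_interval[OF d1 d2]) (auto intro: less_imp_le)
    moreover have "norm (v (x+1)) < e/6" "norm (v x) < e/6" using small by auto
    ultimately have "norm (v1 x) < e" using e by linarith
    thus "dist (v1 x) 0 < e" by simp
  qed
qed

definition plane_wave :: "real \<Rightarrow> real \<Rightarrow> complex" where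
  "plane_wave k t = exp (\<i> * of_real (k * t))"

lemma norm_plane_wave [simp]: "norm (plane_wave k t) = 1"
  unfolding plane_wave_def by simp

lemma plane_wave_has_vector_derivative:
  "(plane_wave k has_vector_derivative (\<i> * of_real k * plane_wave k t)) (at t)"
proof -
  have "((\<lambda>z. exp (\<i> * of_real k * z)) has_field_derivative (\<i> * of_real k * exp (\<i> * of_real k * of_real t))) (at (of_real t))"
    by (auto intro!: derivative_eq_intros)
  from has_vector_derivative_real_field[OF this] show ?thesis
    unfolding plane_wave_def by (simp add: mult.assoc)
qed

lemma cnj_plane_wave: "cnj (plane_wave k t) = plane_wave (- k) t"
  unfolding plane_wave_def by (simp add: exp_cnj)

lemma plane_wave_cnj_mult: "cnj (plane_wave k t) * plane_wave k t = 1"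
  using complex_norm_square[of "plane_wave k t"] by (simp add: mult.commute)

lemma asymptotic_derivative:
  fixes u u' A A' :: "real \<Rightarrow> complex" and k2 :: "real \<Rightarrow> real"
  assumes u_deriv: "\<And>x. (u has_vector_derivative u' x) (at x)"
    and u'_deriv: "\<And>x. (u' has_vector_derivative (- complex_of_real (k2 x) * u x)) (at x)"
    and A_deriv: "\<And>x. (A has_vector_derivative A' x) (at x)"
    and A'_deriv: "\<And>x. (A' has_vector_derivative (- complex_of_real (k\<^sup>2) * A x)) (at x)"
    and k2_lim: "(k2 \<longlongrightarrow> k\<^sup>2) F" and u_asym: "((\<lambda>x. u x - A x) \<longlongrightarrow> 0) F"
    and A_bound: "\<And>x. norm (A x) \<le> M"
    and unit_interval: "\<And>P. eventually P F \<Longrightarrow> eventually (\<lambda>x. \<forall>s\<in>{x..x+1}. P s) F"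
  shows "((\<lambda>x. u' x - A' x) \<longlongrightarrow> 0) F"
proof (rule derivative_tendsto_zero[OF _ _ u_asym _ unit_interval])
  show "((\<lambda>x. u x - A x) has_vector_derivative u' t - A' t) (at t)" for t
    by (intro derivative_intros u_deriv A_deriv)
  show "((\<lambda>x. u' x - A' x) has_vector_derivative
      (- complex_of_real (k2 t) * u t - (- complex_of_real (k\<^sup>2) * A t))) (at t)" for t
    by (intro derivative_intros u'_deriv A'_deriv)
  have "((\<lambda>x. of_real (k2 x) - of_real (k\<^sup>2)) \<longlongrightarrow> (0::complex)) F"
    using tendsto_of_real[OF k2_lim, where 'a = complex] by (simp add: LIM_zero)
  hence "((\<lambda>x. of_real (k2 x) * u x - of_real (k\<^sup>2) * A x) \<longlongrightarrow> 0) F"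
    by (rule asymptotic_mult[OF _ u_asym _ A_bound, where MA = "k\<^sup>2"]) (simp add: norm_power)
  thus "((\<lambda>x. - complex_of_real (k2 x) * u x - (- complex_of_real (k\<^sup>2) * A x)) \<longlongrightarrow> 0) F"
    using tendsto_minus by fastforce
qed

lemma constant_asymptotic_eq:
  fixes f :: "'b \<Rightarrow> real"
  assumes const: "\<And>s t. f s = f t" and lim: "((\<lambda>t. f t - L) \<longlongrightarrow> 0) F" and F: "F \<noteq> bot"
  shows "f t = L"
proof -
  have "(\<lambda>s. f s - L) = (\<lambda>s. f t - L)" using const by auto
  hence "((\<lambda>s. f t - L) \<longlongrightarrow> 0) F" using lim by simp
  thus ?thesis using F by (simp add: tendsto_const_iff)
qed

locale scattering_solution =
  fixes k2 :: "real \<Rightarrow> real" and kp km :: real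
    and u u' :: "real \<Rightarrow> complex" and r \<tau> :: complex
  assumes kp_pos: "kp > 0" and km_pos: "km > 0"
    and lim_top: "(k2 \<longlongrightarrow> kp\<^sup>2) at_top"
    and lim_bot: "(k2 \<longlongrightarrow> km\<^sup>2) at_bot"
    and u_deriv: "\<And>x. (u has_vector_derivative u' x) (at x)"
    and u'_deriv: "\<And>x. (u' has_vector_derivative (- complex_of_real (k2 x) * u x)) (at x)"
    and asym_bot: "((\<lambda>x. u x - (exp (\<i> * of_real (km * x)) + r * exp (- \<i> * of_real (km * x))))
                      \<longlongrightarrow> 0) at_bot"
    and asym_top: "((\<lambda>x. u x - \<tau> * exp (\<i> * of_real (kp * x))) \<longlongrightarrow> 0) at_top"
begin

definition transmitted :: "real \<Rightarrow> complex" where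
  "transmitted t = \<tau> * plane_wave kp t"

definition incident_reflected :: "real \<Rightarrow> complex" where
  "incident_reflected t = plane_wave km t + r * plane_wave (- km) t"

lemma u_asym_top: "((\<lambda>t. u t - transmitted t) \<longlongrightarrow> 0) at_top"
  using asym_top unfolding transmitted_def plane_wave_def .

lemma u_asym_bot: "((\<lambda>t. u t - incident_reflected t) \<longlongrightarrow> 0) at_bot"
  using asym_bot unfolding incident_reflected_def plane_wave_def by simp

lemma u'_asym_top: "((\<lambda>t. u' t - \<i> * of_real kp * transmitted t) \<longlongrightarrow> 0) at_top"
proof (rule asymptotic_derivative[OF u_deriv u'_deriv _ _ lim_top u_asym_top])
  show "(transmitted has_vector_derivative \<i> * of_real kp * transmitted t) (at t)" for t
    unfolding transmitted_def
    by (auto intro!: derivative_eq_intros plane_wave_has_vector_derivative simp: mult_ac)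
  show "((\<lambda>t. \<i> * of_real kp * transmitted t) has_vector_derivative
      - complex_of_real (kp\<^sup>2) * transmitted t) (at t)" for t
    unfolding transmitted_def
    by (auto intro!: derivative_eq_intros plane_wave_has_vector_derivative simp: power2_eq_square mult_ac)
  show "norm (transmitted t) \<le> cmod \<tau>" for t unfolding transmitted_def by (simp add: norm_mult)
qed (rule eventually_unit_interval_at_top)

definition incident_reflected' :: "real \<Rightarrow> complex" where
  "incident_reflected' t = \<i> * of_real km * (plane_wave km t - r * plane_wave (- km) t)"

lemma norm_incident_reflected: "norm (incident_reflected t) \<le> 1 + cmod r"
  unfolding incident_reflected_def
  using norm_triangle_ineq[of "plane_wave km t" "r * plane_wave (- km) t"] by (simp add: norm_mult)

lemma u'_asym_bot: "((\<lambda>t. u' t - incident_reflected' t) \<longlongrightarrow> 0) at_bot"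
proof (rule asymptotic_derivative[OF u_deriv u'_deriv _ _ lim_bot u_asym_bot norm_incident_reflected])
  show "(incident_reflected has_vector_derivative incident_reflected' t) (at t)" for t
    unfolding incident_reflected_def incident_reflected'_def
    by (auto intro!: derivative_eq_intros plane_wave_has_vector_derivative simp: algebra_simps)
  show "(incident_reflected' has_vector_derivative - complex_of_real (km\<^sup>2) * incident_reflected t) (at t)" for t
    unfolding incident_reflected_def incident_reflected'_def
    by (auto intro!: derivative_eq_intros plane_wave_has_vector_derivative
        simp: algebra_simps power2_eq_square)
qed (rule eventually_unit_interval_at_bot)

text \<open>Conservation of the probability current \<open>Im (cnj u * u')\<close> (the Wronskian of \<open>u\<close> and \<open>cnj u\<close>).\<close>
lemma current_constant: "Im (cnj (u s) * u' s) = Im (cnj (u t) * u' t)"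
proof -
  have "((\<lambda>t. Im (cnj (u t) * u' t)) has_real_derivative 0) (at t)" for t
  proof -
    have "((\<lambda>t. cnj (u t) * u' t) has_vector_derivative
        (cnj (u t) * (- complex_of_real (k2 t) * u t) + cnj (u' t) * u' t)) (at t)"
      by (intro derivative_intros u_deriv u'_deriv)
    from has_field_derivative_Im[OF this] show ?thesis by (simp add: algebra_simps)
  qed
  thus ?thesis using DERIV_isconst_all[of "\<lambda>t. Im (cnj (u t) * u' t)" s t] by blast
qed

lemma current_asymptotic:
  assumes F: "F \<noteq> bot" and u: "((\<lambda>t. u t - A t) \<longlongrightarrow> 0) F" and u': "((\<lambda>t. u' t - B t) \<longlongrightarrow> 0) F"
    and A: "\<And>t. norm (A t) \<le> MA" and B: "\<And>t. norm (B t) \<le> MB"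
    and L: "\<And>t. Im (cnj (A t) * B t) = L"
  shows "Im (cnj (u t) * u' t) = L"
proof (rule constant_asymptotic_eq[OF current_constant _ F])
  have "((\<lambda>t. cnj (u t) - cnj (A t)) \<longlongrightarrow> 0) F"
    using tendsto_cnj[OF u] by simp
  from asymptotic_mult[OF this u' _ B, of MA] A
  have "((\<lambda>t. cnj (u t) * u' t - cnj (A t) * B t) \<longlongrightarrow> 0) F" by simp
  from tendsto_Im[OF this] show "((\<lambda>t. Im (cnj (u t) * u' t) - L) \<longlongrightarrow> 0) F"
    unfolding minus_complex.sel zero_complex.sel L .
qed

lemma current_top: "Im (cnj (u t) * u' t) = kp * (cmod \<tau>)\<^sup>2"
proof (rule current_asymptotic[OF _ u_asym_top u'_asym_top])
  show "norm (transmitted t) \<le> cmod \<tau>" and "norm (\<i> * of_real kp * transmitted t) \<le> kp * cmod \<tau>" for t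
    unfolding transmitted_def using kp_pos by (simp_all add: norm_mult)
  have tau: "cnj \<tau> * \<tau> = of_real ((cmod \<tau>)\<^sup>2)"
    by (metis complex_norm_square mult.commute)
  have product: "cnj (transmitted t) * (\<i> * of_real kp * transmitted t) = \<i> * of_real (kp * (cmod \<tau>)\<^sup>2)" for t
  proof -
    have "cnj (transmitted t) * (\<i> * of_real kp * transmitted t)
        = \<i> * of_real kp * (cnj \<tau> * \<tau>) * (cnj (plane_wave kp t) * plane_wave kp t)"
      unfolding transmitted_def by (simp only: complex_cnj_mult ac_simps)
    thus ?thesis unfolding tau plane_wave_cnj_mult by simp
  qed
  show "Im (cnj (transmitted t) * (\<i> * of_real kp * transmitted t)) = kp * (cmod \<tau>)\<^sup>2" for t
    unfolding product by (simp only: Im_i_times Re_complex_of_real)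
qed simp

lemma current_bot: "Im (cnj (u t) * u' t) = km * (1 - (cmod r)\<^sup>2)"
proof (rule current_asymptotic[OF _ u_asym_bot u'_asym_bot norm_incident_reflected])
  show "norm (incident_reflected' t) \<le> km * (1 + cmod r)" for t
    unfolding incident_reflected'_def using km_pos
    norm_triangle_ineq4[of "plane_wave km t" "r * plane_wave (- km) t"]
    by (simp add: norm_mult)
  fix t
  define e where "e = plane_wave km t"
  have e': "plane_wave (- km) t = cnj e" unfolding e_def by (simp add: cnj_plane_wave)
  have ee: "cnj e * e = 1" unfolding e_def by (rule plane_wave_cnj_mult)
  define w where "w = cnj r * e * e"
  have "cnj (incident_reflected t) * incident_reflected' t
      = \<i> * of_real km * (cnj e * e - cnj r * r * (cnj e * e) + (w - cnj w))"
    unfolding incident_reflected_def incident_reflected'_def e_def[symmetric] e' w_def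
    by (simp add: algebra_simps)
  also have "\<dots> = \<i> * of_real km * (1 - of_real ((cmod r)\<^sup>2) + (w - cnj w))"
    unfolding ee by (metis complex_norm_square mult.commute mult_1)
  finally show "Im (cnj (incident_reflected t) * incident_reflected' t) = km * (1 - (cmod r)\<^sup>2)"
    by simp
qed simp

lemma flux_balance: "kp * (cmod \<tau>)\<^sup>2 = km * (1 - (cmod r)\<^sup>2)"
  using current_top[of 0] current_bot[of 0] by simp

lemma wave_energy_limit_top:
  assumes "(c \<longlongrightarrow> kp) at_top"
  shows "((\<lambda>t. wave_energy (c t) (u t) (u' t)) \<longlongrightarrow> kp * (cmod \<tau>)\<^sup>2) at_top"
proof -
  have "((\<lambda>t. wave_energy (c t) (u t) (u' t)) \<longlongrightarrow> (2 * kp * cmod \<tau> + 0)\<^sup>2 / (4 * kp)) at_top"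
  proof (rule wave_energy_asymptotic[OF assms kp_pos u_asym_top u'_asym_top])
    show "norm (transmitted t) \<le> cmod \<tau>" for t unfolding transmitted_def by (simp add: norm_mult)
    have minus: "of_real kp * transmitted t - \<i> * (\<i> * of_real kp * transmitted t) = 2 * of_real kp * transmitted t"
      and plus: "of_real kp * transmitted t + \<i> * (\<i> * of_real kp * transmitted t) = 0" for t
      by (simp_all add: algebra_simps)
    show "norm (of_real kp * transmitted t - \<i> * (\<i> * of_real kp * transmitted t)) = 2 * kp * cmod \<tau>"
      and "norm (of_real kp * transmitted t + \<i> * (\<i> * of_real kp * transmitted t)) = 0" for t
      unfolding minus plus using kp_pos by (simp_all add: norm_mult transmitted_def)
  qed
  moreover have "(2 * kp * cmod \<tau> + 0)\<^sup>2 / (4 * kp) = kp * (cmod \<tau>)\<^sup>2"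
    using kp_pos by (simp add: power2_eq_square)
  ultimately show ?thesis by simp
qed

lemma wave_energy_limit_bot:
  assumes "(c \<longlongrightarrow> km) at_bot"
  shows "((\<lambda>t. wave_energy (c t) (u t) (u' t)) \<longlongrightarrow> km * (1 + cmod r)\<^sup>2) at_bot"
proof -
  have "((\<lambda>t. wave_energy (c t) (u t) (u' t)) \<longlongrightarrow> (2 * km + 2 * km * cmod r)\<^sup>2 / (4 * km)) at_bot"
  proof (rule wave_energy_asymptotic[OF assms km_pos u_asym_bot u'_asym_bot norm_incident_reflected])
    have minus: "of_real km * incident_reflected t - \<i> * incident_reflected' t = 2 * of_real km * plane_wave km t"
      and plus: "of_real km * incident_reflected t + \<i> * incident_reflected' t = 2 * of_real km * r * plane_wave (- km) t" for t
      unfolding incident_reflected_def incident_reflected'_def by (simp_all add: algebra_simps)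
    show "norm (of_real km * incident_reflected t - \<i> * incident_reflected' t) = 2 * km"
      and "norm (of_real km * incident_reflected t + \<i> * incident_reflected' t) = 2 * km * cmod r" for t
      unfolding minus plus using km_pos by (simp_all add: norm_mult)
  qed
  moreover have "(2 * km + 2 * km * cmod r)\<^sup>2 / (4 * km) = km * (1 + cmod r)\<^sup>2"
    using km_pos by (simp add: power2_eq_square field_simps)
  ultimately show ?thesis by simp
qed

lemma asymptotic_energy_comparison:
  assumes C_top: "(C \<longlongrightarrow> kp\<^sup>2) at_top" and C_bot: "(C \<longlongrightarrow> km\<^sup>2) at_bot"
    and compare: "\<And>a b. a \<le> x0 \<Longrightarrow> x0 \<le> b \<Longrightarrow>
      local_energy C u u' a \<le> local_energy C u u' b * exp (ln (C a) / 2 + ln (C b) / 2 + K)"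
  shows "km * (1 + cmod r)\<^sup>2 \<le> kp * (cmod \<tau>)\<^sup>2 * exp (ln km + ln kp + K)"
proof -
  have sqrt_top: "((\<lambda>t. sqrt (C t)) \<longlongrightarrow> kp) at_top"
    using tendsto_real_sqrt[OF C_top] kp_pos by simp
  have sqrt_bot: "((\<lambda>t. sqrt (C t)) \<longlongrightarrow> km) at_bot"
    using tendsto_real_sqrt[OF C_bot] km_pos by simp
  have "((\<lambda>t. ln (C t) / 2) \<longlongrightarrow> ln (kp\<^sup>2) / 2) at_top"
    using kp_pos by (intro tendsto_intros C_top) auto
  hence ln_top: "((\<lambda>t. ln (C t) / 2) \<longlongrightarrow> ln kp) at_top" using kp_pos by (simp add: ln_realpow)
  have "((\<lambda>t. ln (C t) / 2) \<longlongrightarrow> ln (km\<^sup>2) / 2) at_bot"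
    using km_pos by (intro tendsto_intros C_bot) auto
  hence ln_bot: "((\<lambda>t. ln (C t) / 2) \<longlongrightarrow> ln km) at_bot" using km_pos by (simp add: ln_realpow)
  have energy_top: "(local_energy C u u' \<longlongrightarrow> kp * (cmod \<tau>)\<^sup>2) at_top"
    using wave_energy_limit_top[OF sqrt_top] unfolding local_energy_def .
  have energy_bot: "(local_energy C u u' \<longlongrightarrow> km * (1 + cmod r)\<^sup>2) at_bot"
    using wave_energy_limit_bot[OF sqrt_bot] unfolding local_energy_def .
  have left_limit: "km * (1 + cmod r)\<^sup>2 \<le> local_energy C u u' b * exp (ln km + ln (C b) / 2 + K)"
    if b: "x0 \<le> b" for b
  proof (rule tendsto_le[OF trivial_limit_at_bot_linorder _ energy_bot])
    show "((\<lambda>a. local_energy C u u' b * exp (ln (C a) / 2 + ln (C b) / 2 + K))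
        \<longlongrightarrow> local_energy C u u' b * exp (ln km + ln (C b) / 2 + K)) at_bot"
      by (intro tendsto_intros ln_bot)
    show "\<forall>\<^sub>F a in at_bot. local_energy C u u' a \<le> local_energy C u u' b * exp (ln (C a) / 2 + ln (C b) / 2 + K)"
      unfolding eventually_at_bot_linorder using compare b by (intro exI[of _ x0]) auto
  qed
  show ?thesis
  proof (rule tendsto_le[OF trivial_limit_at_top_linorder _ tendsto_const])
    show "((\<lambda>b. local_energy C u u' b * exp (ln km + ln (C b) / 2 + K))
        \<longlongrightarrow> kp * (cmod \<tau>)\<^sup>2 * exp (ln km + ln kp + K)) at_top"
      by (intro tendsto_intros energy_top ln_top)
    show "\<forall>\<^sub>F b in at_top. km * (1 + cmod r)\<^sup>2 \<le> local_energy C u u' b * exp (ln km + ln (C b) / 2 + K)"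
      unfolding eventually_at_top_linorder using left_limit by (intro exI[of _ x0]) auto
  qed
qed

end

lemma continuous_dominated_tails_integrable:
  fixes f h1 h2 :: "real \<Rightarrow> real"
  assumes f: "continuous_on UNIV f"
    and h1: "h1 absolutely_integrable_on {a1..}" and h2: "h2 absolutely_integrable_on {..a2}"
    and f_h1: "\<And>x. \<bar>f x\<bar> \<le> \<bar>h1 x\<bar>" and f_h2: "\<And>x. \<bar>f x\<bar> \<le> \<bar>h2 x\<bar>"
  shows "f absolutely_integrable_on UNIV"
proof -
  have tail: "f absolutely_integrable_on S" if S: "S \<in> sets lebesgue" and h: "h absolutely_integrable_on S"
    and f_h: "\<And>x. \<bar>f x\<bar> \<le> \<bar>h x\<bar>" for S and h :: "real \<Rightarrow> real"
  proof (rule measurable_bounded_by_integrable_imp_absolutely_integrable[OF _ S])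
    show "f \<in> borel_measurable (lebesgue_on S)"
      by (rule continuous_imp_measurable_on_sets_lebesgue[OF continuous_on_subset[OF f] S]) auto
    show "(\<lambda>x. \<bar>h x\<bar>) integrable_on S" using h unfolding absolutely_integrable_on_def by simp
  qed (use f_h in simp)
  have "f absolutely_integrable_on ({..a2} \<union> {min a1 a2..max a1 a2} \<union> {a1..})"
    by (intro absolutely_integrable_Un tail[OF _ h1 f_h1] tail[OF _ h2 f_h2]
        absolutely_integrable_continuous_real continuous_on_subset[OF f]) auto
  moreover have "{..a2} \<union> {min a1 a2..max a1 a2} \<union> {a1..} = UNIV" by auto
  ultimately show ?thesis by simp
qed

lemma integral_sublevel_deficit:
  fixes f :: "real \<Rightarrow> real"
  shows "integral {x. f x < c} (\<lambda>x. c - f x) = integral UNIV (\<lambda>x. max (c - f x) 0)"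
proof -
  have "(\<lambda>x. if x \<in> {x. f x < c} then c - f x else 0) = (\<lambda>x. max (c - f x) 0)"
    by (auto simp: max_def)
  thus ?thesis using integral_restrict_UNIV[of "{x. f x < c}" "\<lambda>x. c - f x"] by simp
qed

lemma sech_squared_le:
  fixes \<rho> \<Theta> :: real
  assumes \<rho>: "\<rho> \<ge> 0" and ineq: "(1 + \<rho>)\<^sup>2 \<le> (1 - \<rho>\<^sup>2) * exp (2 * \<Theta>)"
  shows "(sech \<Theta>)\<^sup>2 \<le> 1 - \<rho>\<^sup>2"
proof -
  define Y where "Y = exp (2 * \<Theta>)"
  have Y: "Y > 0" unfolding Y_def by simp
  have tanh_Y: "tanh \<Theta> = (Y - 1) / (Y + 1)"
  proof -
    have e: "exp (- 2 * \<Theta>) = 1 / Y" unfolding Y_def by (simp add: exp_minus field_simps)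
    have "(1 - 1 / Y) / (1 + 1 / Y) = (Y - 1) / (Y + 1)" using Y by (simp add: divide_simps)
    thus ?thesis unfolding tanh_real_altdef e .
  qed
  have "1 + \<rho> \<le> (1 - \<rho>) * Y"
  proof -
    have "(1 + \<rho>) * (1 + \<rho>) \<le> ((1 - \<rho>) * Y) * (1 + \<rho>)"
      using ineq unfolding Y_def by (simp add: power2_eq_square algebra_simps)
    thus ?thesis using \<rho> by simp
  qed
  hence "\<rho> \<le> tanh \<Theta>" unfolding tanh_Y using Y by (simp add: field_simps)
  hence "\<rho>\<^sup>2 \<le> (tanh \<Theta>)\<^sup>2" using \<rho> by (intro power_mono)
  moreover have "(sech \<Theta>)\<^sup>2 = 1 - (tanh \<Theta>)\<^sup>2"
    unfolding sech_def tanh_def using cosh_square_eq[of \<Theta>] add_pos_nonneg[of 1 "(sinh \<Theta>)\<^sup>2"]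
    by (simp add: power_divide field_simps)
  ultimately show ?thesis by simp
qed

lemma deficit_integrable:
  fixes k2 :: "real \<Rightarrow> real"
  assumes cont: "continuous_on UNIV k2"
    and int_top: "\<exists>a. (\<lambda>x. k2 x - kp\<^sup>2) absolutely_integrable_on {a..}"
    and int_bot: "\<exists>a. (\<lambda>x. k2 x - km\<^sup>2) absolutely_integrable_on {..a}"
    and below: "\<Delta>\<^sup>2 \<le> min (kp\<^sup>2) (km\<^sup>2)"
  shows "(\<lambda>x. max (\<Delta>\<^sup>2 - k2 x) 0) integrable_on UNIV"
proof -
  obtain a1 a2 where h1: "(\<lambda>x. k2 x - kp\<^sup>2) absolutely_integrable_on {a1..}"
    and h2: "(\<lambda>x. k2 x - km\<^sup>2) absolutely_integrable_on {..a2}"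
    using int_top int_bot by blast
  have "(\<lambda>x. max (\<Delta>\<^sup>2 - k2 x) 0) absolutely_integrable_on UNIV"
    by (rule continuous_dominated_tails_integrable[OF _ h1 h2])
      (use cont below in \<open>auto intro!: continuous_intros\<close>)
  thus ?thesis using set_lebesgue_integral_eq_integral(1) by blast
qed

lemma truncated_energy_across_well:
  fixes k2 :: "real \<Rightarrow> real" and u u' :: "real \<Rightarrow> complex" and \<Delta> x0 a b :: real
  defines "C \<equiv> \<lambda>t. max (\<Delta>\<^sup>2) (k2 t)" and "d \<equiv> \<lambda>t. max (\<Delta>\<^sup>2 - k2 t) 0"
  assumes u_deriv: "\<And>x. (u has_vector_derivative u' x) (at x)"
    and u'_deriv: "\<And>x. (u' has_vector_derivative (- complex_of_real (k2 x) * u x)) (at x)"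
    and cont: "continuous_on UNIV k2"
    and mono_left: "\<And>x y. x \<le> y \<Longrightarrow> y \<le> x0 \<Longrightarrow> k2 y \<le> k2 x"
    and mono_right: "\<And>x y. x0 \<le> x \<Longrightarrow> x \<le> y \<Longrightarrow> k2 x \<le> k2 y"
    and \<Delta>_pos: "\<Delta> > 0" and \<Delta>_low: "k2 x0 \<le> \<Delta>\<^sup>2" and d_int: "d integrable_on UNIV"
    and a: "a \<le> x0" and b: "x0 \<le> b"
  shows "local_energy C u u' a \<le> local_energy C u u' b *
     exp (ln (C a) / 2 + ln (C b) / 2 + (integral UNIV d / \<Delta> - ln (\<Delta>\<^sup>2)))"
proof -
  have "local_energy C u u' a \<le> local_energy C u u' b *
     exp (ln (C a) / 2 + ln (C b) / 2 - ln (\<Delta>\<^sup>2) + integral UNIV (\<lambda>t. d t / \<Delta>))"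
  proof (rule local_energy_across_well[OF u_deriv u'_deriv _ \<Delta>_pos, where x_min = x0])
    show "continuous_on UNIV (\<lambda>t. d t / \<Delta>)" unfolding d_def using \<Delta>_pos by (intro continuous_intros cont) auto
    show "\<bar>k2 t - C t\<bar> \<le> \<Delta> * (d t / \<Delta>)" for t unfolding C_def d_def using \<Delta>_pos by auto
    show "(\<lambda>t. d t / \<Delta>) integrable_on UNIV" by (rule integrable_on_divide[OF d_int])
    show "C y \<le> C x" if "x \<le> y" "y \<le> x0" for x y
      unfolding C_def using mono_left[OF that] by (simp add: max.coboundedI2)
    show "C x \<le> C y" if "x0 \<le> x" "x \<le> y" for x y
      unfolding C_def using mono_right[OF that] by (simp add: max.coboundedI2)
  qed (use a b \<Delta>_low in \<open>auto simp: C_def\<close>)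
  thus ?thesis by (simp add: algebra_simps)
qed

theorem mainTheorem8:
  fixes k2 :: "real \<Rightarrow> real" and kp km x0 \<Delta> :: real
    and u u' :: "real \<Rightarrow> complex" and r \<tau> :: complex
  assumes kp_pos: "kp > 0" and km_pos: "km > 0"
    and lim_top: "(k2 \<longlongrightarrow> kp\<^sup>2) at_top"
    and lim_bot: "(k2 \<longlongrightarrow> km\<^sup>2) at_bot"
    and int_top: "\<exists>a. (\<lambda>x. k2 x - kp\<^sup>2) absolutely_integrable_on {a..}"
    and int_bot: "\<exists>a. (\<lambda>x. k2 x - km\<^sup>2) absolutely_integrable_on {..a}"
    and cont: "continuous_on UNIV k2"
    and mono_left: "\<And>x y. x \<le> y \<Longrightarrow> y \<le> x0 \<Longrightarrow> k2 y \<le> k2 x"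
    and mono_right: "\<And>x y. x0 \<le> x \<Longrightarrow> x \<le> y \<Longrightarrow> k2 x \<le> k2 y"
    and u_deriv: "\<And>x. (u has_vector_derivative u' x) (at x)"
    and u'_deriv: "\<And>x. (u' has_vector_derivative (- complex_of_real (k2 x) * u x)) (at x)"
    and asym_bot: "((\<lambda>x. u x - (exp (\<i> * of_real (km * x)) + r * exp (- \<i> * of_real (km * x))))
                      \<longlongrightarrow> 0) at_bot"
    and asym_top: "((\<lambda>x. u x - \<tau> * exp (\<i> * of_real (kp * x))) \<longlongrightarrow> 0) at_top"
    and Delta_pos: "\<Delta> > 0"
    and Delta_low: "k2 x0 \<le> \<Delta>\<^sup>2"
    and Delta_up: "\<Delta>\<^sup>2 \<le> min (kp\<^sup>2) (km\<^sup>2)"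
  shows "(kp / km) * (cmod \<tau>)\<^sup>2 \<ge>
    (sech (1/2 * ln (kp * km / \<Delta>\<^sup>2)
       + 1 / (2 * \<Delta>) * integral {x. k2 x < \<Delta>\<^sup>2} (\<lambda>x. \<Delta>\<^sup>2 - k2 x)))\<^sup>2"
    (is "_ \<ge> (sech ?\<Theta>)\<^sup>2")
proof -
  interpret scattering_solution k2 kp km u u' r \<tau>
    using kp_pos km_pos lim_top lim_bot u_deriv u'_deriv asym_bot asym_top by unfold_locales
  define C where "C = (\<lambda>t. max (\<Delta>\<^sup>2) (k2 t))"
  define d where "d = (\<lambda>t. max (\<Delta>\<^sup>2 - k2 t) 0)"
  have d_int: "d integrable_on UNIV"
    unfolding d_def by (rule deficit_integrable[OF cont int_top int_bot Delta_up])
  have well: "local_energy C u u' a \<le> local_energy C u u' b *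
      exp (ln (C a) / 2 + ln (C b) / 2 + (integral UNIV d / \<Delta> - ln (\<Delta>\<^sup>2)))" if "a \<le> x0" "x0 \<le> b" for a b
    using truncated_energy_across_well[OF u_deriv u'_deriv cont mono_left mono_right Delta_pos Delta_low
        d_int[unfolded d_def] that] unfolding C_def d_def .
  have "(C \<longlongrightarrow> max (\<Delta>\<^sup>2) (kp\<^sup>2)) at_top" and "(C \<longlongrightarrow> max (\<Delta>\<^sup>2) (km\<^sup>2)) at_bot"
    unfolding C_def by (intro tendsto_max tendsto_const lim_top lim_bot)+
  hence C_top: "(C \<longlongrightarrow> kp\<^sup>2) at_top" and C_bot: "(C \<longlongrightarrow> km\<^sup>2) at_bot"
    using Delta_up by (simp_all add: max_absorb2)
  have "km * (1 + cmod r)\<^sup>2 \<le> kp * (cmod \<tau>)\<^sup>2 * exp (ln km + ln kp + (integral UNIV d / \<Delta> - ln (\<Delta>\<^sup>2)))"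
    by (rule asymptotic_energy_comparison[OF C_top C_bot well])
  also have "ln km + ln kp + (integral UNIV d / \<Delta> - ln (\<Delta>\<^sup>2)) = 2 * ?\<Theta>"
    unfolding d_def integral_sublevel_deficit using kp_pos km_pos Delta_pos
    by (simp add: ln_div ln_mult field_simps)
  finally have "(1 + cmod r)\<^sup>2 \<le> (1 - (cmod r)\<^sup>2) * exp (2 * ?\<Theta>)"
    unfolding flux_balance using km_pos by (simp add: mult.assoc)
  hence "(sech ?\<Theta>)\<^sup>2 \<le> 1 - (cmod r)\<^sup>2" by (rule sech_squared_le[OF norm_ge_zero])
  moreover have "kp / km * (cmod \<tau>)\<^sup>2 = 1 - (cmod r)\<^sup>2" using flux_balance km_pos by (simp add: field_simps)
  ultimately show ?thesis by simp
qed

end
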